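(* Let $\Sigma$ be a one-sided subshift of finite type and let $\mathbf B,\mathbf B'$ be Bowen quasicocycles on $\Sigma$. Then $\mathbf B\sim\mathbf B'$ if and only if $\mu_{\mathbf a}(\mathbf B)=\mu_{\mathbf a}(\mathbf B')$ for every periodic word $\mathbf a$.
   Context: $\Sigma=\{(x_n)_{n\ge0}:R_{x_nx_{n+1}}=1\}$ with $R$ an irreducible aperiodic $0/1$ matrix on the alphabet $\{1,\dots,d\}$, $\tau$ the shift, $[x]_n$ the length-$n$ cylinder of $x$. For $B:\Sigma\to\mathbb R$, $\mathrm{var}_n(B)=\sup\{|B(x)-B(y)|:[x]_n=[y]_n\}$. A (Bowen) quasicocycle is a sequence $\mathbf B=(B_n)_{n\ge1}$ of bounded Borel functions with $\sup_{n,m}\sup_x|B_{n+m}(x)-B_n(x)-B_m(\tau^nx)|<\infty$ and $\sup_n\mathrm{var}_n(B_n)<\infty$. $\mathbf B\sim\mathbf B'$ (cohomologous) if $\sup_n\|B_n-B'_n\|_\infty<\infty$. For $\mu$ a $\tau$-invariant probability, $\mu(\mathbf B)=\lim_n\frac1n\int B_n\,d\mu$. A finite allowed word $\mathbf a=a_1\cdots a_n$ is periodic if $R_{a_na_1}=1$; then $\mathbf a\mathbf a\mathbf a\cdots$ is a periodic point of period $n$ and $\mu_{\mathbf a}$ is the invariant probability equidistributed on its orbit. *)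

theory Defs
  imports "HOL-Analysis.Analysis"
begin

fun mpow :: "nat \<Rightarrow> (nat \<Rightarrow> nat \<Rightarrow> nat) \<Rightarrow> nat \<Rightarrow> nat \<Rightarrow> nat \<Rightarrow> nat" where
  "mpow d R 0 i j = (if i = j then 1 else 0)"
| "mpow d R (Suc n) i j = (\<Sum>k\<in>{1..d}. mpow d R n i k * R k j)"

definition zero_one_matrix :: "nat \<Rightarrow> (nat \<Rightarrow> nat \<Rightarrow> nat) \<Rightarrow> bool" where
  "zero_one_matrix d R \<longleftrightarrow> (\<forall>i\<in>{1..d}. \<forall>j\<in>{1..d}. R i j \<in> {0, 1})"

definition irreducible_mat :: "nat \<Rightarrow> (nat \<Rightarrow> nat \<Rightarrow> nat) \<Rightarrow> bool" where
  "irreducible_mat d R \<longleftrightarrow> (\<forall>i\<in>{1..d}. \<forall>j\<in>{1..d}. \<exists>n>0. mpow d R n i j > 0)"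

definition aperiodic_mat :: "nat \<Rightarrow> (nat \<Rightarrow> nat \<Rightarrow> nat) \<Rightarrow> bool" where
  "aperiodic_mat d R \<longleftrightarrow> (\<forall>i\<in>{1..d}. Gcd {n. n > 0 \<and> mpow d R n i i > 0} = 1)"

definition SFT :: "nat \<Rightarrow> (nat \<Rightarrow> nat \<Rightarrow> nat) \<Rightarrow> (nat \<Rightarrow> nat) set" where
  "SFT d R = {x. (\<forall>n. x n \<in> {1..d}) \<and> (\<forall>n. R (x n) (x (Suc n)) = 1)}"

definition shift :: "(nat \<Rightarrow> nat) \<Rightarrow> (nat \<Rightarrow> nat)" where
  "shift x = (\<lambda>n. x (Suc n))"

definition bowen_quasicocycle :: "nat \<Rightarrow> (nat \<Rightarrow> nat \<Rightarrow> nat) \<Rightarrow> (nat \<Rightarrow> (nat \<Rightarrow> nat) \<Rightarrow> real) \<Rightarrow> bool" where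
  "bowen_quasicocycle d R B \<longleftrightarrow>
     (\<forall>n\<ge>1. B n \<in> borel_measurable (restrict_space borel (SFT d R))) \<and>
     (\<forall>n\<ge>1. \<exists>M. \<forall>x\<in>SFT d R. \<bar>B n x\<bar> \<le> M) \<and>
     (\<exists>C. \<forall>n\<ge>1. \<forall>m\<ge>1. \<forall>x\<in>SFT d R. \<bar>B (n + m) x - B n x - B m ((shift ^^ n) x)\<bar> \<le> C) \<and>
     (\<exists>C. \<forall>n\<ge>1. \<forall>x\<in>SFT d R. \<forall>y\<in>SFT d R. (\<forall>k<n. x k = y k) \<longrightarrow> \<bar>B n x - B n y\<bar> \<le> C)"

definition cohomologous :: "nat \<Rightarrow> (nat \<Rightarrow> nat \<Rightarrow> nat) \<Rightarrow> (nat \<Rightarrow> (nat \<Rightarrow> nat) \<Rightarrow> real) \<Rightarrow> (nat \<Rightarrow> (nat \<Rightarrow> nat) \<Rightarrow> real) \<Rightarrow> bool" where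
  "cohomologous d R B B' \<longleftrightarrow> (\<exists>C. \<forall>n\<ge>1. \<forall>x\<in>SFT d R. \<bar>B n x - B' n x\<bar> \<le> C)"

definition periodic_word :: "nat \<Rightarrow> (nat \<Rightarrow> nat \<Rightarrow> nat) \<Rightarrow> nat list \<Rightarrow> bool" where
  "periodic_word d R a \<longleftrightarrow> a \<noteq> [] \<and> set a \<subseteq> {1..d} \<and>
     (\<forall>i. Suc i < length a \<longrightarrow> R (a ! i) (a ! Suc i) = 1) \<and> R (last a) (hd a) = 1"

definition periodic_point :: "nat list \<Rightarrow> (nat \<Rightarrow> nat)" where
  "periodic_point a = (\<lambda>n. a ! (n mod length a))"

text \<open>Integral against the invariant probability equidistributed on the orbit of aaa...\<close>
definition orbit_integral :: "nat list \<Rightarrow> ((nat \<Rightarrow> nat) \<Rightarrow> real) \<Rightarrow> real" where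
  "orbit_integral a f = (\<Sum>k<length a. f ((shift ^^ k) (periodic_point a))) / real (length a)"

definition periodic_average :: "nat list \<Rightarrow> (nat \<Rightarrow> (nat \<Rightarrow> nat) \<Rightarrow> real) \<Rightarrow> real" where
  "periodic_average a B = lim (\<lambda>n. orbit_integral a (B n) / real n)"

end

theory Submission
  imports Defs
begin

text \<open>Subtracting, it suffices to show that a Bowen quasicocycle \<open>D\<close> is bounded iff
  \<open>\<mu>\<^sub>a(D) = 0\<close> for every periodic word \<open>a\<close>. Along a periodic orbit the integrals
  \<open>\<integral>D\<^sub>n d\<mu>\<^sub>a\<close> form a quasi-additive sequence, so Fekete's argument gives
  \<open>|\<integral>D\<^sub>n d\<mu>\<^sub>a - n \<mu>\<^sub>a(D)| \<le> C\<close>; boundedness of \<open>D\<close> therefore forces \<open>\<mu>\<^sub>a(D) = 0\<close>.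
  Conversely, if \<open>\<mu>\<^sub>a(D) = 0\<close> then \<open>D\<^sub>L\<close> is bounded by \<open>3C\<close> at the periodic point of a
  periodic word of length \<open>L\<close>. Given \<open>x\<close> and \<open>n\<close>, irreducibility closes \<open>x\<^sub>0\<dots>x\<^sub>n\<^sub>-\<^sub>1\<close>
  into a periodic word by a path of bounded length \<open>m\<close>. Bowen's condition compares \<open>D\<^sub>n(x)\<close>
  with \<open>D\<^sub>n\<close> at that periodic point, and quasi-additivity splits \<open>D\<^sub>n\<^sub>+\<^sub>m\<close> into \<open>D\<^sub>n\<close> and a
  term \<open>D\<^sub>m\<close>, which is uniformly bounded because \<open>m\<close> ranges over a finite set.\<close>

lemma quasi_additive_mult_bound:
  fixes f :: "nat \<Rightarrow> real"
  assumes q: "\<And>n m. n \<ge> 1 \<Longrightarrow> m \<ge> 1 \<Longrightarrow> \<bar>f (n + m) - f n - f m\<bar> \<le> C"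
    and "n \<ge> 1" "k \<ge> 1"
  shows "\<bar>f (n * k) - real k * f n\<bar> \<le> (real k - 1) * C"
  using \<open>k \<ge> 1\<close>
proof (induction k rule: nat_induct_at_least)
  case base
  then show ?case by simp
next
  case (Suc k)
  have "\<bar>f (n * k + n) - f (n * k) - f n\<bar> \<le> C"
    using q Suc.hyps \<open>n \<ge> 1\<close> by simp
  then show ?case
    using Suc.IH by (simp add: algebra_simps abs_le_iff) linarith
qed

lemma quasi_additive_ratio_bound:
  fixes f :: "nat \<Rightarrow> real"
  assumes q: "\<And>n m. n \<ge> 1 \<Longrightarrow> m \<ge> 1 \<Longrightarrow> \<bar>f (n + m) - f n - f m\<bar> \<le> C"
    and n: "n \<ge> 1" and k: "k \<ge> 1"
  shows "\<bar>f (n * k) / real (n * k) - f n / real n\<bar> \<le> C / real n"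
proof -
  have C: "C \<ge> 0" using q[of 1 1] by simp
  have pos: "real n > 0" "real k > 0" using n k by auto
  have "\<bar>f (n * k) / real (n * k) - f n / real n\<bar> = \<bar>f (n * k) - real k * f n\<bar> / (real n * real k)"
    using pos by (simp add: field_simps abs_divide)
  also have "\<dots> \<le> ((real k - 1) * C) / (real n * real k)"
    using quasi_additive_mult_bound[of f C, OF q n k] pos by (intro divide_right_mono) auto
  also have "\<dots> \<le> (real k * C) / (real n * real k)"
    using pos C by (intro divide_right_mono) (auto simp: algebra_simps)
  also have "\<dots> = C / real n" using pos by simp
  finally show ?thesis .
qed

lemma quasi_additive_limit:
  fixes f :: "nat \<Rightarrow> real"
  assumes q: "\<And>n m. n \<ge> 1 \<Longrightarrow> m \<ge> 1 \<Longrightarrow> \<bar>f (n + m) - f n - f m\<bar> \<le> C"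
  obtains l where "(\<lambda>n. f n / real n) \<longlonglongrightarrow> l" and "\<And>n. n \<ge> 1 \<Longrightarrow> \<bar>f n - real n * l\<bar> \<le> C"
proof -
  have C: "C \<ge> 0" using q[of 1 1] by simp
  have ratio: "\<bar>f (n * k) / real (n * k) - f n / real n\<bar> \<le> C / real n"
    if "n \<ge> 1" "k \<ge> 1" for n k
    using quasi_additive_ratio_bound[of f C, OF q that] .
  have "Cauchy (\<lambda>n. f n / real n)"
  proof (rule metric_CauchyI)
    fix e :: real
    assume e: "e > 0"
    obtain N :: nat where N: "2 * C / e < real N"
      using reals_Archimedean2 by blast
    with C e have "N \<ge> 1"
      by (metis divide_nonneg_pos less_one linorder_not_less mult_nonneg_nonneg of_nat_0
          zero_le_numeral)
    show "\<exists>M. \<forall>m\<ge>M. \<forall>n\<ge>M. dist (f m / real m) (f n / real n) < e"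
    proof (intro exI allI impI)
      fix m n
      assume mn: "m \<ge> N" "n \<ge> N"
      have "\<bar>f m / real m - f n / real n\<bar> \<le> C / real m + C / real n"
        using ratio[of m n] ratio[of n m] mn \<open>N \<ge> 1\<close> by (simp add: mult.commute abs_le_iff)
      also have "\<dots> \<le> 2 * C / real N"
        using mn \<open>N \<ge> 1\<close> C frac_le[of C C "real N" "real m"] frac_le[of C C "real N" "real n"] by simp
      also have "\<dots> < e" using N e \<open>N \<ge> 1\<close> by (simp add: field_simps)
      finally show "dist (f m / real m) (f n / real n) < e" by (simp add: dist_real_def)
    qed
  qed
  then obtain l where l: "(\<lambda>n. f n / real n) \<longlonglongrightarrow> l"
    using Cauchy_convergent_iff convergent_def by blast
  have "\<bar>f n - real n * l\<bar> \<le> C" if n: "n \<ge> 1" for n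
  proof -
    have "((\<lambda>n. f n / real n) \<circ> (\<lambda>k. n * k)) \<longlonglongrightarrow> l"
      using n by (intro LIMSEQ_subseq_LIMSEQ[OF l]) (simp add: strict_mono_def)
    then have "(\<lambda>k. \<bar>f (n * k) / real (n * k) - f n / real n\<bar>) \<longlonglongrightarrow> \<bar>l - f n / real n\<bar>"
      by (intro tendsto_intros) (simp add: o_def)
    then have "\<bar>l - f n / real n\<bar> \<le> C / real n"
      by (rule LIMSEQ_le_const2) (use ratio n in \<open>auto intro: exI[of _ 1]\<close>)
    then show ?thesis
      using n by (simp add: field_simps abs_le_iff)
  qed
  with l that show ?thesis by blast
qed

lemma funpow_shift: "(shift ^^ k) x = (\<lambda>j. x (j + k))"
  by (induction k) (auto simp: shift_def)

lemma funpow_shift_in_SFT: "x \<in> SFT d R \<Longrightarrow> (shift ^^ k) x \<in> SFT d R"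
  unfolding SFT_def funpow_shift by auto

lemma periodic_word_iff_cyclic:
  "periodic_word d R a \<longleftrightarrow> a \<noteq> [] \<and>
     (\<forall>i<length a. a ! i \<in> {1..d} \<and> R (a ! i) (a ! (Suc i mod length a)) = 1)"
proof
  assume "periodic_word d R a"
  then have ne: "a \<noteq> []" and letters: "set a \<subseteq> {1..d}"
    and step: "\<And>i. Suc i < length a \<Longrightarrow> R (a ! i) (a ! Suc i) = 1"
    and wrap: "R (last a) (hd a) = 1"
    unfolding periodic_word_def by auto
  have "R (a ! i) (a ! (Suc i mod length a)) = 1" if i: "i < length a" for i
  proof (cases "Suc i < length a")
    case True
    then show ?thesis using step by simp
  next
    case False
    with i have "Suc i = length a" by simp
    then have "i = length a - 1" "Suc i mod length a = 0" by auto
    with wrap ne show ?thesis by (simp add: last_conv_nth hd_conv_nth)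
  qed
  with ne letters show "a \<noteq> [] \<and>
     (\<forall>i<length a. a ! i \<in> {1..d} \<and> R (a ! i) (a ! (Suc i mod length a)) = 1)"
    by (auto simp: subset_iff)
next
  assume cyclic: "a \<noteq> [] \<and>
     (\<forall>i<length a. a ! i \<in> {1..d} \<and> R (a ! i) (a ! (Suc i mod length a)) = 1)"
  then have ne: "a \<noteq> []" by blast
  have "R (last a) (hd a) = 1"
  proof -
    have "length a - 1 < length a" "Suc (length a - 1) mod length a = 0" using ne by auto
    with cyclic ne show ?thesis by (metis last_conv_nth hd_conv_nth)
  qed
  moreover have "R (a ! i) (a ! Suc i) = 1" if "Suc i < length a" for i
    using cyclic that by (metis Suc_lessD mod_less)
  ultimately show "periodic_word d R a"
    using cyclic unfolding periodic_word_def by (auto simp: in_set_conv_nth)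
qed

lemma periodic_point_in_SFT:
  assumes "periodic_word d R a"
  shows "periodic_point a \<in> SFT d R"
proof -
  have ne: "a \<noteq> []"
    and cyclic: "\<And>i. i < length a \<Longrightarrow> a ! i \<in> {1..d} \<and> R (a ! i) (a ! (Suc i mod length a)) = 1"
    using assms unfolding periodic_word_iff_cyclic by auto
  have "periodic_point a n \<in> {1..d} \<and> R (periodic_point a n) (periodic_point a (Suc n)) = 1" for n
    using cyclic[of "n mod length a"] ne unfolding periodic_point_def by (simp add: mod_Suc_eq)
  then show ?thesis
    unfolding SFT_def by auto
qed

lemma funpow_shift_length_periodic_point:
  "a \<noteq> [] \<Longrightarrow> (shift ^^ length a) (periodic_point a) = periodic_point a"
  by (simp add: funpow_shift periodic_point_def)

lemma orbit_integral_const: "a \<noteq> [] \<Longrightarrow> orbit_integral a (\<lambda>_. c) = c"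
  unfolding orbit_integral_def by simp

lemma orbit_integral_diff:
  "orbit_integral a (\<lambda>x. f x - g x) = orbit_integral a f - orbit_integral a g"
  unfolding orbit_integral_def by (simp add: sum_subtractf diff_divide_distrib)

lemma orbit_integral_abs_le:
  assumes "a \<noteq> []"
    and "\<And>k. k < length a \<Longrightarrow> \<bar>f ((shift ^^ k) (periodic_point a))\<bar> \<le> K"
  shows "\<bar>orbit_integral a f\<bar> \<le> K"
proof -
  have "\<bar>\<Sum>k<length a. f ((shift ^^ k) (periodic_point a))\<bar> \<le> (\<Sum>k<length a. K)"
    using assms(2) by (intro order_trans[OF sum_abs sum_mono]) auto
  with assms(1) show ?thesis
    unfolding orbit_integral_def by (simp add: abs_divide divide_le_eq mult.commute)
qed

lemma orbit_integral_shift_invariant: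
  assumes "a \<noteq> []"
  shows "orbit_integral a (\<lambda>x. f ((shift ^^ n) x)) = orbit_integral a f"
proof (induction n arbitrary: f)
  case 0
  then show ?case by simp
next
  case (Suc n)
  let ?p = "periodic_point a"
  define g where "g k = f ((shift ^^ k) ?p)" for k
  have "(\<Sum>k<length a. g (Suc k)) = (\<Sum>k<length a. g k)"
  proof -
    have "g (length a) = g 0"
      unfolding g_def using funpow_shift_length_periodic_point[OF assms] by simp
    then show ?thesis
      using sum.lessThan_Suc_shift[of g "length a"] by simp
  qed
  then have "orbit_integral a (\<lambda>x. f (shift x)) = orbit_integral a f"
    unfolding orbit_integral_def g_def by simp
  then show ?case
    using Suc.IH[of "\<lambda>x. f (shift x)"] by (simp add: funpow_Suc_right)
qed

definition cocycle_defect_le :: "nat \<Rightarrow> (nat \<Rightarrow> nat \<Rightarrow> nat) \<Rightarrow> (nat \<Rightarrow> (nat \<Rightarrow> nat) \<Rightarrow> real) \<Rightarrow> real \<Rightarrow> bool" where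
  "cocycle_defect_le d R G C \<longleftrightarrow>
     (\<forall>n\<ge>1. \<forall>m\<ge>1. \<forall>x\<in>SFT d R. \<bar>G (n + m) x - G n x - G m ((shift ^^ n) x)\<bar> \<le> C)"

lemma orbit_integral_quasi_additive:
  assumes a: "periodic_word d R a" and G: "cocycle_defect_le d R G C"
    and "n \<ge> 1" "m \<ge> 1"
  shows "\<bar>orbit_integral a (G (n + m)) - orbit_integral a (G n) - orbit_integral a (G m)\<bar> \<le> C"
proof -
  have ne: "a \<noteq> []" using a unfolding periodic_word_def by blast
  have "\<bar>orbit_integral a (\<lambda>x. G (n + m) x - G n x - G m ((shift ^^ n) x))\<bar> \<le> C"
  proof (rule orbit_integral_abs_le[OF ne])
    fix k
    have "(shift ^^ k) (periodic_point a) \<in> SFT d R"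
      using funpow_shift_in_SFT periodic_point_in_SFT[OF a] by blast
    then show "\<bar>G (n + m) ((shift ^^ k) (periodic_point a)) - G n ((shift ^^ k) (periodic_point a))
        - G m ((shift ^^ n) ((shift ^^ k) (periodic_point a)))\<bar> \<le> C"
      using G \<open>n \<ge> 1\<close> \<open>m \<ge> 1\<close> unfolding cocycle_defect_le_def by blast
  qed
  then show ?thesis
    by (simp only: orbit_integral_diff orbit_integral_shift_invariant[OF ne])
qed

lemma orbit_integral_tendsto_periodic_average:
  assumes "periodic_word d R a" and "cocycle_defect_le d R G C"
  shows "(\<lambda>n. orbit_integral a (G n) / real n) \<longlonglongrightarrow> periodic_average a G"
    and "n \<ge> 1 \<Longrightarrow> \<bar>orbit_integral a (G n) - real n * periodic_average a G\<bar> \<le> C"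
proof -
  obtain l where l: "(\<lambda>n. orbit_integral a (G n) / real n) \<longlonglongrightarrow> l"
    and rate: "\<And>n. n \<ge> 1 \<Longrightarrow> \<bar>orbit_integral a (G n) - real n * l\<bar> \<le> C"
    using quasi_additive_limit[of "\<lambda>n. orbit_integral a (G n)" C]
      orbit_integral_quasi_additive[OF assms] by blast
  have "periodic_average a G = l"
    unfolding periodic_average_def using l by (rule limI)
  with l rate show "(\<lambda>n. orbit_integral a (G n) / real n) \<longlonglongrightarrow> periodic_average a G"
    and "n \<ge> 1 \<Longrightarrow> \<bar>orbit_integral a (G n) - real n * periodic_average a G\<bar> \<le> C"
    by auto
qed

lemma bowen_quasicocycleD:
  assumes "bowen_quasicocycle d R G"
  shows "n \<ge> 1 \<Longrightarrow> G n \<in> borel_measurable (restrict_space borel (SFT d R))"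
    and "n \<ge> 1 \<Longrightarrow> \<exists>M. \<forall>x\<in>SFT d R. \<bar>G n x\<bar> \<le> M"
    and "\<exists>C. cocycle_defect_le d R G C"
    and "\<exists>V. \<forall>n\<ge>1. \<forall>x\<in>SFT d R. \<forall>y\<in>SFT d R. (\<forall>k<n. x k = y k) \<longrightarrow> \<bar>G n x - G n y\<bar> \<le> V"
  using assms unfolding bowen_quasicocycle_def cocycle_defect_le_def by (elim conjE; blast)+

lemma bowen_quasicocycle_diff:
  assumes G: "bowen_quasicocycle d R G" and G': "bowen_quasicocycle d R G'"
  shows "bowen_quasicocycle d R (\<lambda>n x. G n x - G' n x)"
proof -
  obtain C C' where
    "cocycle_defect_le d R G C" "cocycle_defect_le d R G' C'"
    using bowen_quasicocycleD(3)[OF G] bowen_quasicocycleD(3)[OF G'] by blast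
  then have "\<forall>n\<ge>1. \<forall>m\<ge>1. \<forall>x\<in>SFT d R. \<bar>(G (n + m) x - G' (n + m) x) - (G n x - G' n x)
      - (G m ((shift ^^ n) x) - G' m ((shift ^^ n) x))\<bar> \<le> C + C'"
    unfolding cocycle_defect_le_def by (fastforce simp: abs_le_iff)
  moreover obtain V V' where
    V: "\<forall>n\<ge>1. \<forall>x\<in>SFT d R. \<forall>y\<in>SFT d R. (\<forall>k<n. x k = y k) \<longrightarrow> \<bar>G n x - G n y\<bar> \<le> V" and
    V': "\<forall>n\<ge>1. \<forall>x\<in>SFT d R. \<forall>y\<in>SFT d R. (\<forall>k<n. x k = y k) \<longrightarrow> \<bar>G' n x - G' n y\<bar> \<le> V'"
    using bowen_quasicocycleD(4)[OF G] bowen_quasicocycleD(4)[OF G'] by blast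
  have "\<forall>n\<ge>1. \<forall>x\<in>SFT d R. \<forall>y\<in>SFT d R. (\<forall>k<n. x k = y k) \<longrightarrow>
      \<bar>(G n x - G' n x) - (G n y - G' n y)\<bar> \<le> V + V'"
  proof (intro allI impI ballI)
    fix n :: nat and x y
    assume "n \<ge> 1" "x \<in> SFT d R" "y \<in> SFT d R" "\<forall>k<n. x k = y k"
    with V V' have "\<bar>G n x - G n y\<bar> \<le> V" "\<bar>G' n x - G' n y\<bar> \<le> V'" by blast+
    then show "\<bar>(G n x - G' n x) - (G n y - G' n y)\<bar> \<le> V + V'" by (simp add: abs_le_iff)
  qed
  moreover have "\<exists>M. \<forall>x\<in>SFT d R. \<bar>G n x - G' n x\<bar> \<le> M" if n: "n \<ge> 1" for n
  proof -
    obtain M M' where "\<forall>x\<in>SFT d R. \<bar>G n x\<bar> \<le> M" "\<forall>x\<in>SFT d R. \<bar>G' n x\<bar> \<le> M'"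
      using bowen_quasicocycleD(2)[OF G n] bowen_quasicocycleD(2)[OF G' n] by blast
    then have "\<forall>x\<in>SFT d R. \<bar>G n x - G' n x\<bar> \<le> M + M'" by fastforce
    then show ?thesis ..
  qed
  moreover have "(\<lambda>x. G n x - G' n x) \<in> borel_measurable (restrict_space borel (SFT d R))"
    if "n \<ge> 1" for n
    using bowen_quasicocycleD(1)[OF G that] bowen_quasicocycleD(1)[OF G' that] by measurable
  ultimately show ?thesis
    unfolding bowen_quasicocycle_def by blast
qed

lemma periodic_average_diff:
  assumes "periodic_word d R a" and "cocycle_defect_le d R G C" and "cocycle_defect_le d R G' C'"
  shows "periodic_average a (\<lambda>n x. G n x - G' n x) = periodic_average a G - periodic_average a G'"
proof -
  have "(\<lambda>n. orbit_integral a (\<lambda>x. G n x - G' n x) / real n)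
      \<longlonglongrightarrow> periodic_average a G - periodic_average a G'"
    unfolding orbit_integral_diff diff_divide_distrib
    using assms by (intro tendsto_diff orbit_integral_tendsto_periodic_average)
  then show ?thesis
    unfolding periodic_average_def by (rule limI)
qed

lemma periodic_average_eq_0_if_bounded:
  assumes a: "periodic_word d R a" and G: "cocycle_defect_le d R G C"
    and bounded: "\<And>n x. n \<ge> 1 \<Longrightarrow> x \<in> SFT d R \<Longrightarrow> \<bar>G n x\<bar> \<le> K"
  shows "periodic_average a G = 0"
proof -
  have ne: "a \<noteq> []" using a unfolding periodic_word_def by blast
  have "\<bar>orbit_integral a (G n)\<bar> \<le> K" if "n \<ge> 1" for n
    using that periodic_point_in_SFT[OF a]
    by (intro orbit_integral_abs_le[OF ne] bounded funpow_shift_in_SFT)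
  then have "\<forall>\<^sub>F n in sequentially. norm (orbit_integral a (G n) / real n) \<le> K / real n"
    unfolding eventually_sequentially
    by (intro exI[of _ 1]) (auto simp: abs_divide divide_right_mono)
  then have "(\<lambda>n. orbit_integral a (G n) / real n) \<longlonglongrightarrow> 0"
    by (rule Lim_null_comparison) (rule lim_const_over_n)
  then show ?thesis
    using orbit_integral_tendsto_periodic_average(1)[OF a G] LIMSEQ_unique by blast
qed

lemma periodic_orbit_bound_if_periodic_average_eq_0:
  assumes a: "periodic_word d R a" and G: "cocycle_defect_le d R G C"
    and average: "periodic_average a G = 0"
  shows "\<bar>G (length a) (periodic_point a)\<bar> \<le> 3 * C"
proof -
  let ?L = "length a" and ?p = "periodic_point a"
  have ne: "a \<noteq> []" using a unfolding periodic_word_def by blast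
  then have L: "?L \<ge> 1" by (simp add: Suc_le_eq)
  have p: "?p \<in> SFT d R" using periodic_point_in_SFT[OF a] .
  have defect: "\<bar>G (n + m) ?p - G n ?p - G m ((shift ^^ n) ?p)\<bar> \<le> C" if "n \<ge> 1" "m \<ge> 1" for n m
    using G that p unfolding cocycle_defect_le_def by blast
  have "C \<ge> 0" using defect[of 1 1] by linarith
  have integral: "\<bar>orbit_integral a (G ?L)\<bar> \<le> C"
    using orbit_integral_tendsto_periodic_average(2)[OF a G L] average by simp
  \<comment> \<open>\<open>G (L + k) p\<close> splits both as \<open>G L p + G k p\<close> (since \<open>shift\<^sup>L p = p\<close>) and as
    \<open>G k p + G L (shift\<^sup>k p)\<close>, up to \<open>C\<close> each time.\<close>
  have "\<bar>G ?L ((shift ^^ k) ?p) - G ?L ?p\<bar> \<le> 2 * C" for k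
  proof (cases "k = 0")
    case True
    then show ?thesis using \<open>C \<ge> 0\<close> by simp
  next
    case False
    then have "k \<ge> 1" by simp
    then show ?thesis
      using defect[OF L \<open>k \<ge> 1\<close>] defect[OF \<open>k \<ge> 1\<close> L]
      by (simp add: funpow_shift_length_periodic_point[OF ne] add.commute abs_le_iff)
  qed
  then have "\<bar>orbit_integral a (\<lambda>x. G ?L x - G ?L ?p)\<bar> \<le> 2 * C"
    by (intro orbit_integral_abs_le[OF ne])
  with integral show ?thesis
    by (simp add: orbit_integral_diff orbit_integral_const[OF ne] abs_le_iff)
qed

lemma mpow_pos_imp_path:
  assumes "mpow d R m i j > 0" and "i \<in> {1..d}" and "j \<in> {1..d}"
  shows "\<exists>w. w 0 = i \<and> w m = j \<and> (\<forall>t\<le>m. w t \<in> {1..d}) \<and> (\<forall>t<m. R (w t) (w (Suc t)) > 0)"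
  using assms
proof (induction m arbitrary: j)
  case 0
  then have "i = j" by (simp split: if_splits)
  with 0 show ?case by (intro exI[of _ "\<lambda>_. i"]) auto
next
  case (Suc m)
  have "(\<Sum>k\<in>{1..d}. mpow d R m i k * R k j) \<noteq> 0"
    using Suc.prems(1) by (metis gr_implies_not0 mpow.simps(2))
  then obtain k where k: "k \<in> {1..d}" "mpow d R m i k > 0" "R k j > 0"
    by (rule sum.not_neutral_contains_not_neutral) simp
  then obtain w where w: "w 0 = i" "w m = k" "\<forall>t\<le>m. w t \<in> {1..d}" "\<forall>t<m. R (w t) (w (Suc t)) > 0"
    using Suc.IH Suc.prems by blast
  have "(w(Suc m := j)) 0 = i \<and> (w(Suc m := j)) (Suc m) = j \<and>
      (\<forall>t\<le>Suc m. (w(Suc m := j)) t \<in> {1..d}) \<and>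
      (\<forall>t<Suc m. R ((w(Suc m := j)) t) ((w(Suc m := j)) (Suc t)) > 0)"
    using w k Suc.prems by (auto simp: le_Suc_eq less_Suc_eq)
  then show ?case by blast
qed

lemma periodic_word_close_path:
  assumes R: "zero_one_matrix d R" and x: "x \<in> SFT d R" and "m \<ge> 1"
    and w: "w 0 = x n" "w m = x 0" "\<forall>t\<le>m. w t \<in> {1..d}" "\<forall>t<m. R (w t) (w (Suc t)) > 0"
  defines "q \<equiv> \<lambda>t. if t < n then x t else w (t - n)"
  shows "periodic_word d R (map q [0..<n + m])"
proof -
  let ?a = "map q [0..<n + m]"
  have x_letters: "\<And>t. x t \<in> {1..d}" and x_steps: "\<And>t. R (x t) (x (Suc t)) = 1"
    using x unfolding SFT_def by auto
  have w_steps: "R (w t) (w (Suc t)) = 1" if "t < m" for t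
  proof -
    have "R (w t) (w (Suc t)) \<in> {0, 1}"
      using R w(3) that unfolding zero_one_matrix_def by simp
    with w(4) that show ?thesis by auto
  qed
  have q_letters: "q t \<in> {1..d}" if "t < n + m" for t
    using x_letters w that unfolding q_def by auto
  have q_steps: "R (q t) (q (Suc t)) = 1" if "t < n + m" for t
  proof (cases "t < n")
    case True
    then show ?thesis
      using x_steps[of t] w(1) unfolding q_def by (cases "Suc t = n") auto
  next
    case False
    then have "q t = w (t - n)" "q (Suc t) = w (Suc (t - n))"
      unfolding q_def by (auto simp: Suc_diff_le)
    with False that show ?thesis using w_steps[of "t - n"] by simp
  qed
  have q_wrap: "q (Suc t mod (n + m)) = q (Suc t)" if "t < n + m" for t
  proof (cases "Suc t < n + m")
    case False
    with that have "Suc t = n + m" by simp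
    with w(1,2) \<open>m \<ge> 1\<close> show ?thesis unfolding q_def by auto
  qed simp
  have "Suc i mod (n + m) < n + m" for i
    using \<open>m \<ge> 1\<close> by simp
  with q_letters q_steps q_wrap \<open>m \<ge> 1\<close> show ?thesis
    unfolding periodic_word_iff_cyclic by (simp del: upt_Suc)
qed

lemma periodic_word_extending_prefix:
  assumes R: "zero_one_matrix d R" and irreducible: "irreducible_mat d R"
  obtains M where "\<And>x n. x \<in> SFT d R \<Longrightarrow> \<exists>a. periodic_word d R a \<and>
      n < length a \<and> length a \<le> n + M \<and> (\<forall>k<n. periodic_point a k = x k)"
proof -
  obtain len where len: "\<And>i j. i \<in> {1..d} \<Longrightarrow> j \<in> {1..d} \<Longrightarrow> len i j > 0 \<and> mpow d R (len i j) i j > 0"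
    using irreducible unfolding irreducible_mat_def by metis
  define M where "M = (\<Sum>i\<in>{1..d}. \<Sum>j\<in>{1..d}. len i j)"
  have len_le: "len i j \<le> M" if "i \<in> {1..d}" "j \<in> {1..d}" for i j
    unfolding M_def using that
    by (intro order_trans[OF member_le_sum[of j] member_le_sum[of i]]) auto
  have "\<exists>a. periodic_word d R a \<and> n < length a \<and> length a \<le> n + M \<and> (\<forall>k<n. periodic_point a k = x k)"
    if x: "x \<in> SFT d R" for x n
  proof -
    have letters: "x n \<in> {1..d}" "x 0 \<in> {1..d}" using x unfolding SFT_def by auto
    define m where "m = len (x n) (x 0)"
    have "m \<ge> 1" "m \<le> M" using len[OF letters] len_le[OF letters] unfolding m_def by auto
    obtain w where "w 0 = x n" "w m = x 0" "\<forall>t\<le>m. w t \<in> {1..d}" "\<forall>t<m. R (w t) (w (Suc t)) > 0"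
      using mpow_pos_imp_path len[OF letters] letters unfolding m_def by blast
    define a where "a = map (\<lambda>t. if t < n then x t else w (t - n)) [0..<n + m]"
    have "periodic_word d R a"
      unfolding a_def by (rule periodic_word_close_path) fact+
    moreover have "periodic_point a k = x k" if "k < n" for k
      using that \<open>m \<ge> 1\<close> unfolding a_def periodic_point_def by (simp del: upt_Suc)
    ultimately show ?thesis
      using \<open>m \<ge> 1\<close> \<open>m \<le> M\<close> unfolding a_def by auto
  qed
  then show ?thesis using that by blast
qed

lemma finite_uniform_bound:
  fixes f :: "'i \<Rightarrow> 'x \<Rightarrow> real"
  assumes "finite S" and "\<And>m. m \<in> S \<Longrightarrow> \<exists>M. \<forall>x\<in>A. \<bar>f m x\<bar> \<le> M"
  obtains M where "\<And>m x. m \<in> S \<Longrightarrow> x \<in> A \<Longrightarrow> \<bar>f m x\<bar> \<le> M"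
proof -
  obtain g where g: "\<And>m x. m \<in> S \<Longrightarrow> x \<in> A \<Longrightarrow> \<bar>f m x\<bar> \<le> g m"
    using assms(2) by metis
  have "\<bar>f m x\<bar> \<le> (\<Sum>m\<in>S. \<bar>g m\<bar>)" if "m \<in> S" "x \<in> A" for m x
    using g[OF that] member_le_sum[of m S "\<lambda>m. \<bar>g m\<bar>"] assms(1) that by fastforce
  then show ?thesis using that by blast
qed

lemma bounded_if_periodic_averages_vanish:
  assumes R: "zero_one_matrix d R" and irreducible: "irreducible_mat d R"
    and G: "bowen_quasicocycle d R G"
    and vanish: "\<And>a. periodic_word d R a \<Longrightarrow> periodic_average a G = 0"
  shows "\<exists>K. \<forall>n\<ge>1. \<forall>x\<in>SFT d R. \<bar>G n x\<bar> \<le> K"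
proof -
  obtain C where defect: "cocycle_defect_le d R G C"
    using bowen_quasicocycleD(3)[OF G] ..
  obtain V where variation:
    "\<forall>n\<ge>1. \<forall>x\<in>SFT d R. \<forall>y\<in>SFT d R. (\<forall>k<n. x k = y k) \<longrightarrow> \<bar>G n x - G n y\<bar> \<le> V"
    using bowen_quasicocycleD(4)[OF G] ..
  obtain M where closing: "\<And>x n. x \<in> SFT d R \<Longrightarrow> \<exists>a. periodic_word d R a \<and>
      n < length a \<and> length a \<le> n + M \<and> (\<forall>k<n. periodic_point a k = x k)"
    using periodic_word_extending_prefix[OF R irreducible] by blast
  obtain K where short: "\<And>m x. m \<in> {1..M} \<Longrightarrow> x \<in> SFT d R \<Longrightarrow> \<bar>G m x\<bar> \<le> K"
    using finite_uniform_bound[of "{1..M}" "SFT d R" G] bowen_quasicocycleD(2)[OF G] by auto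
  have "\<bar>G n x\<bar> \<le> V + K + 4 * C" if n: "n \<ge> 1" and x: "x \<in> SFT d R" for n x
  proof -
    obtain a where a: "periodic_word d R a" "n < length a" "length a \<le> n + M"
      and prefix: "\<forall>k<n. periodic_point a k = x k"
      using closing[OF x] by blast
    define m where "m = length a - n"
    let ?p = "periodic_point a"
    have m: "m \<in> {1..M}" "length a = n + m" using a unfolding m_def by auto
    have p: "?p \<in> SFT d R" using periodic_point_in_SFT[OF a(1)] .
    have "\<bar>G n x - G n ?p\<bar> \<le> V"
      using variation n x p prefix by simp
    moreover have "\<bar>G (n + m) ?p - G n ?p - G m ((shift ^^ n) ?p)\<bar> \<le> C"
      using defect n m p unfolding cocycle_defect_le_def by simp
    moreover have "\<bar>G m ((shift ^^ n) ?p)\<bar> \<le> K"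
      using short[OF m(1) funpow_shift_in_SFT[OF p]] .
    moreover have "\<bar>G (n + m) ?p\<bar> \<le> 3 * C"
      using periodic_orbit_bound_if_periodic_average_eq_0[OF a(1) defect] vanish a(1) m(2)
      by simp
    ultimately show ?thesis by (simp add: abs_le_iff)
  qed
  then show ?thesis by blast
qed

lemma bounded_iff_periodic_averages_vanish:
  assumes "zero_one_matrix d R" and "irreducible_mat d R" and G: "bowen_quasicocycle d R G"
  shows "(\<exists>K. \<forall>n\<ge>1. \<forall>x\<in>SFT d R. \<bar>G n x\<bar> \<le> K) \<longleftrightarrow>
    (\<forall>a. periodic_word d R a \<longrightarrow> periodic_average a G = 0)"
proof -
  obtain C where "cocycle_defect_le d R G C"
    using bowen_quasicocycleD(3)[OF G] ..
  then show ?thesis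
    using periodic_average_eq_0_if_bounded bounded_if_periodic_averages_vanish[OF assms] by blast
qed

theorem mainTheorem8:
  fixes d :: nat and R :: "nat \<Rightarrow> nat \<Rightarrow> nat"
    and B B' :: "nat \<Rightarrow> (nat \<Rightarrow> nat) \<Rightarrow> real"
  assumes "d \<ge> 1"
    and "zero_one_matrix d R" and "irreducible_mat d R" and "aperiodic_mat d R"
    and "bowen_quasicocycle d R B" and "bowen_quasicocycle d R B'"
  shows "cohomologous d R B B' \<longleftrightarrow>
    (\<forall>a. periodic_word d R a \<longrightarrow> periodic_average a B = periodic_average a B')"
proof -
  let ?D = "\<lambda>n x. B n x - B' n x"
  obtain C C' where "cocycle_defect_le d R B C" "cocycle_defect_le d R B' C'"
    using bowen_quasicocycleD(3) assms(5,6) by blast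
  then have averages: "periodic_average a ?D = periodic_average a B - periodic_average a B'"
    if "periodic_word d R a" for a
    using periodic_average_diff that by blast
  have "cohomologous d R B B' \<longleftrightarrow> (\<exists>K. \<forall>n\<ge>1. \<forall>x\<in>SFT d R. \<bar>?D n x\<bar> \<le> K)"
    unfolding cohomologous_def ..
  also have "\<dots> \<longleftrightarrow> (\<forall>a. periodic_word d R a \<longrightarrow> periodic_average a ?D = 0)"
    using bounded_iff_periodic_averages_vanish[OF assms(2,3) bowen_quasicocycle_diff[OF assms(5,6)]] .
  also have "\<dots> \<longleftrightarrow> (\<forall>a. periodic_word d R a \<longrightarrow> periodic_average a B = periodic_average a B')"
    using averages by auto
  finally show ?thesis .
qed

end
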